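(* Fix an integer $\ell\ge2$ and a real $p\in(0,1)$, and let $X$ be the number of derangements of $G_{k,\ell}(m)$. Then $\mathbb{E}[X^2]\sim\mathbb{E}[X]^2$ as $k\to\infty$.
   Context: For integers $k\ge1$, $\ell\ge2$, $D_{k,\ell}$ is the digraph with vertex set $\{v_{i,j}: i\in[k], j\in[\ell]\}$ in which $(v_{i,j},v_{i',j'})$ is an arc if and only if $j'\equiv j+1 \pmod \ell$; it has $k^2\ell$ arcs. Given $p\in(0,1)$, let $m=\lfloor pk^2\ell\rfloor$ and let $G_{k,\ell}(m)$ be a spanning subgraph of $D_{k,\ell}$ chosen uniformly at random among those with exactly $m$ arcs. A permutation in a digraph $G=(V,E)$ is a bijection $f:V\to V$ such that for every $v$ either $f(v)=v$ or $(v,f(v))\in E$; a derangement is a permutation fixing no vertex. Asymptotics are as $k\to\infty$ with $\ell,p$ fixed; $A\sim B$ means $A/B\to1$. *)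

theory Defs
  imports "HOL-Probability.Probability" "HOL-Library.Landau_Symbols"
begin

text \<open>Vertex v_{i,j} is encoded as the pair (i,j) with i < k, j < l (0-based indices).\<close>
definition Dverts :: "nat \<Rightarrow> nat \<Rightarrow> (nat \<times> nat) set" where
  "Dverts k l = {..<k} \<times> {..<l}"

definition Darcs :: "nat \<Rightarrow> nat \<Rightarrow> ((nat \<times> nat) \<times> (nat \<times> nat)) set" where
  "Darcs k l = {(u, v). u \<in> Dverts k l \<and> v \<in> Dverts k l \<and> snd v = (snd u + 1) mod l}"

text \<open>Permutations of a digraph (V,E): bijections f : V \<rightarrow> V with f v = v or (v, f v) \<in> E.
  Functions are taken extensionally (identity outside V) so that the set is finite.\<close>
definition digraph_perms :: "'a set \<Rightarrow> ('a \<times> 'a) set \<Rightarrow> ('a \<Rightarrow> 'a) set" where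
  "digraph_perms V E = {f. bij_betw f V V \<and> (\<forall>v\<in>V. f v = v \<or> (v, f v) \<in> E) \<and> (\<forall>v. v \<notin> V \<longrightarrow> f v = v)}"

definition digraph_derangements :: "'a set \<Rightarrow> ('a \<times> 'a) set \<Rightarrow> ('a \<Rightarrow> 'a) set" where
  "digraph_derangements V E = {f \<in> digraph_perms V E. \<forall>v\<in>V. f v \<noteq> v}"

definition Dsubgraphs :: "nat \<Rightarrow> nat \<Rightarrow> nat \<Rightarrow> ((nat \<times> nat) \<times> (nat \<times> nat)) set set" where
  "Dsubgraphs k l m = {E. E \<subseteq> Darcs k l \<and> card E = m}"

definition m_of :: "real \<Rightarrow> nat \<Rightarrow> nat \<Rightarrow> nat" where
  "m_of p k l = nat \<lfloor>p * real (k^2 * l)\<rfloor>"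

definition G_rand :: "nat \<Rightarrow> nat \<Rightarrow> nat \<Rightarrow> ((nat \<times> nat) \<times> (nat \<times> nat)) set pmf" where
  "G_rand k l m = pmf_of_set (Dsubgraphs k l m)"

definition num_der :: "nat \<Rightarrow> nat \<Rightarrow> ((nat \<times> nat) \<times> (nat \<times> nat)) set \<Rightarrow> real" where
  "num_der k l E = real (card (digraph_derangements (Dverts k l) E))"

end

theory Submission
  imports Defs "HOL-Combinatorics.Permutations" "HOL-Real_Asymp.Real_Asymp"
begin

text \<open>
  A derangement of D_{k,l} maps layer j onto layer j+1 mod l, so it amounts to an l-tuple of
  permutations of the k rows: there are (k!)^l of them, each has a = kl arcs, and two of them f, g
  share exactly c(f,g) = #{v. f v = g v} arcs. With N = k^2 l this gives
  E X = (k!)^l C(N-a, m-a) / C(N, m) and E X^2 = sum_{f,g} C(N-2a+c, m-2a+c) / C(N, m).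
  Bounding C(N-2a+c, m-2a+c) <= C(N-2a, m-2a) rho^c with rho ~ N/m ~ 1/p, and summing rho^c layer by
  layer (on one layer, the permutations agreeing with a given one on t prescribed rows number at most
  (k-t)!, so the pair sum is at most (k!)^2 e^(rho-1)), yields E X^2 / (E X)^2 <= q^a e^(l(rho-1)) with
  q = (m-a)(N-a) / (m(N-2a)). As q^a -> e^(l(1-1/p)) and e^(l(rho-1)) -> e^(l(1/p-1)), this bound
  tends to 1, while (E X)^2 <= E X^2 always.
\<close>

section \<open>Binomial coefficients and the exponential series\<close>

lemma sum_Pow_card:
  fixes F :: "nat \<Rightarrow> 'a :: comm_semiring_1"
  assumes "finite S"
  shows "(\<Sum>T\<in>Pow S. F (card T)) = (\<Sum>t\<le>card S. of_nat (card S choose t) * F t)"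
proof -
  have "(\<Sum>T\<in>Pow S. F (card T)) = (\<Sum>t\<le>card S. \<Sum>T\<in>{T. T \<in> Pow S \<and> card T = t}. F (card T))"
    using assms by (intro sum.group[symmetric]) (auto intro: card_mono)
  also have "\<dots> = (\<Sum>t\<le>card S. of_nat (card S choose t) * F t)"
  proof (intro sum.cong refl)
    fix t
    have "(\<Sum>T\<in>{T. T \<in> Pow S \<and> card T = t}. F (card T)) = (\<Sum>T\<in>{T. T \<subseteq> S \<and> card T = t}. F t)"
      by (intro sum.cong) auto
    then show "(\<Sum>T\<in>{T. T \<in> Pow S \<and> card T = t}. F (card T)) = of_nat (card S choose t) * F t"
      using n_subsets[OF assms, of t] by simp
  qed
  finally show ?thesis .
qed

lemma power_card_eq_sum_Pow:
  fixes y :: "'a :: comm_semiring_1"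
  assumes "finite S"
  shows "(y + 1) ^ card S = (\<Sum>T\<in>Pow S. y ^ card T)"
  using prod_add[OF assms, of "\<lambda>_. y" "\<lambda>_. 1"] by simp

lemma sum_power_div_fact_le_exp:
  fixes y :: real
  assumes "0 \<le> y"
  shows "(\<Sum>t\<le>n. y ^ t / fact t) \<le> exp y"
proof -
  have exp_sums: "(\<lambda>t. y ^ t / fact t) sums exp y"
    using exp_converges[of y] by (simp add: field_simps)
  show ?thesis
    using sum_le_suminf[OF sums_summable[OF exp_sums], of "{..n}"] sums_unique[OF exp_sums] assms
    by auto
qed

lemma sum_Pow_fact_diff_card_mult_power:
  fixes y :: real
  assumes "finite K"
  shows "(\<Sum>T\<in>Pow K. fact (card K - card T) * y ^ card T) = fact (card K) * (\<Sum>t\<le>card K. y ^ t / fact t)"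
proof -
  define n where "n = card K"
  have "(\<Sum>T\<in>Pow K. fact (n - card T) * y ^ card T) = (\<Sum>t\<le>n. of_nat (n choose t) * (fact (n - t) * y ^ t))"
    unfolding n_def by (rule sum_Pow_card[OF assms])
  also have "\<dots> = (\<Sum>t\<le>n. fact n * (y ^ t / fact t))"
  proof (intro sum.cong refl)
    fix t assume "t \<in> {..n}"
    then have h: "fact t * fact (n - t) * (n choose t) = (fact n :: nat)"
      by (simp add: binomial_fact_lemma)
    have "real (n choose t) * fact t * fact (n - t) = fact n"
      using arg_cong[OF h, of real] by (simp add: algebra_simps)
    then show "of_nat (n choose t) * (fact (n - t) * y ^ t) = fact n * (y ^ t / fact t)"
      by (simp add: field_simps)
  qed
  finally show ?thesis unfolding n_def by (simp add: sum_distrib_left)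
qed

lemma card_supersets_eq_choose:
  assumes U: "finite U" and S: "S \<subseteq> U" and m: "card S \<le> m"
  shows "card {E. E \<subseteq> U \<and> card E = m \<and> S \<subseteq> E} = (card U - card S) choose (m - card S)"
proof -
  have fS: "finite S" using U S finite_subset by blast
  have "bij_betw (\<lambda>E. E - S) {E. E \<subseteq> U \<and> card E = m \<and> S \<subseteq> E} {B. B \<subseteq> U - S \<and> card B = m - card S}"
  proof (rule bij_betw_byWitness[where f' = "\<lambda>B. B \<union> S"])
    show "(\<lambda>E. E - S) ` {E. E \<subseteq> U \<and> card E = m \<and> S \<subseteq> E} \<subseteq> {B. B \<subseteq> U - S \<and> card B = m - card S}"
      using U fS by (auto simp: card_Diff_subset dest: finite_subset)
    show "(\<lambda>B. B \<union> S) ` {B. B \<subseteq> U - S \<and> card B = m - card S} \<subseteq> {E. E \<subseteq> U \<and> card E = m \<and> S \<subseteq> E}"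
    proof
      fix E assume "E \<in> (\<lambda>B. B \<union> S) ` {B. B \<subseteq> U - S \<and> card B = m - card S}"
      then obtain B where B: "B \<subseteq> U - S" "card B = m - card S" "E = B \<union> S" by auto
      have "finite B" using B U finite_subset by blast
      then have "card E = card B + card S" unfolding B(3) using B fS by (intro card_Un_disjoint) auto
      then show "E \<in> {E. E \<subseteq> U \<and> card E = m \<and> S \<subseteq> E}" using B S m by auto
    qed
  qed auto
  then have "card {E. E \<subseteq> U \<and> card E = m \<and> S \<subseteq> E} = card {B. B \<subseteq> U - S \<and> card B = m - card S}"
    by (rule bij_betw_same_card)
  also have "\<dots> = (card U - card S) choose (m - card S)"
    using U fS S by (simp add: n_subsets card_Diff_subset)
  finally show ?thesis .
qed

lemma choose_eq_choose_diff_mult_prod: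
  assumes "t \<le> r" "r \<le> n"
  shows "real (n choose r) = real ((n - t) choose (r - t)) * (\<Prod>i<t. real (n - i) / real (r - i))"
  using assms
proof (induction t)
  case 0
  then show ?case by simp
next
  case (Suc t)
  have IH: "real (n choose r) = real ((n - t) choose (r - t)) * (\<Prod>i<t. real (n - i) / real (r - i))"
    using Suc by simp
  define n' where "n' = n - t - 1"
  define r' where "r' = r - t - 1"
  have n': "n - t = Suc n'" using Suc.prems unfolding n'_def by simp
  have r': "r - t = Suc r'" using Suc.prems unfolding r'_def by simp
  have nn: "n - Suc t = n'" and rr: "r - Suc t = r'" unfolding n'_def r'_def by simp_all
  have e: "Suc n' * (n' choose r') = (Suc n' choose Suc r') * Suc r'" by (rule Suc_times_binomial_eq)
  have "real (Suc n') * real (n' choose r') = real (Suc n' choose Suc r') * real (Suc r')"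
    using arg_cong[OF e, of real] by (simp only: of_nat_mult)
  then have "real (Suc n' choose Suc r') = real (n' choose r') * (real (Suc n') / real (Suc r'))"
    by (simp add: field_simps del: of_nat_Suc)
  then have H: "real ((n - t) choose (r - t)) = real ((n - Suc t) choose (r - Suc t)) * (real (n - t) / real (r - t))"
    unfolding n' r' nn rr .
  have "real (n choose r) = real ((n - Suc t) choose (r - Suc t)) * ((\<Prod>i<t. real (n - i) / real (r - i)) * (real (n - t) / real (r - t)))"
    unfolding IH H by (simp only: ac_simps)
  then show ?case by (simp only: prod.lessThan_Suc)
qed

lemma choose_add_le_mult_power:
  assumes "r0 \<le> n0"
  shows "real ((n0 + c) choose (r0 + c)) \<le> real (n0 choose r0) * ((real n0 + 1) / (real r0 + 1)) ^ c"
proof (induction c)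
  case 0
  then show ?case by simp
next
  case (Suc c)
  have e: "Suc (n0 + c) * ((n0 + c) choose (r0 + c)) = (Suc (n0 + c) choose Suc (r0 + c)) * Suc (r0 + c)"
    by (rule Suc_times_binomial_eq)
  have e2: "real ((n0 + Suc c) choose (r0 + Suc c)) = real ((n0 + c) choose (r0 + c)) * ((real n0 + c + 1) / (real r0 + c + 1))"
  proof -
    have "real (Suc (n0 + c) * ((n0 + c) choose (r0 + c))) = real ((Suc (n0 + c) choose Suc (r0 + c)) * Suc (r0 + c))"
      using e by simp
    then show ?thesis by (simp add: field_simps)
  qed
  have le: "(real n0 + c + 1) / (real r0 + c + 1) \<le> (real n0 + 1) / (real r0 + 1)"
  proof -
    have "(real n0 + c + 1) * (real r0 + 1) \<le> (real n0 + 1) * (real r0 + c + 1)"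
    proof -
      have "real c * real r0 \<le> real c * real n0" using assms by (intro mult_left_mono) auto
      then show ?thesis by (simp add: algebra_simps)
    qed
    then show ?thesis by (simp add: field_simps)
  qed
  have "real ((n0 + Suc c) choose (r0 + Suc c)) \<le> real (n0 choose r0) * ((real n0 + 1) / (real r0 + 1)) ^ c * ((real n0 + c + 1) / (real r0 + c + 1))"
    unfolding e2 by (intro mult_right_mono Suc.IH) auto
  also have "\<dots> \<le> real (n0 choose r0) * ((real n0 + 1) / (real r0 + 1)) ^ c * ((real n0 + 1) / (real r0 + 1))"
    by (intro mult_left_mono le) auto
  finally show ?case by (simp only: power_Suc2 mult.assoc)
qed

lemma ratio_factor_le:
  fixes N m a i :: real
  assumes "0 \<le> i" "i < a" "2 * a \<le> m" "m \<le> N" "2 * a < N"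
  shows "((N - i) / (m - i)) / ((N - a - i) / (m - a - i)) \<le> ((m - a) * (N - a)) / (m * (N - 2 * a))"
proof -
  have p1: "m - i > 0" "m - a - i > 0" "N - a - i > 0" "m > 0" "N - 2 * a > 0" using assms by linarith+
  have i1: "(m - a - i) * m \<le> (m - a) * (m - i)"
  proof -
    have "0 \<le> a * i" using assms by simp
    then show ?thesis by (simp add: algebra_simps)
  qed
  have i2: "(N - i) * (N - 2 * a) \<le> (N - a) * (N - a - i)"
  proof -
    have "a * i \<le> a * a" using assms by (intro mult_left_mono) auto
    then show ?thesis by (simp add: algebra_simps)
  qed
  have "((N - i) / (m - i)) / ((N - a - i) / (m - a - i)) = ((m - a - i) / (m - i)) * ((N - i) / (N - a - i))"
    using p1 by (simp add: field_simps)
  also have "\<dots> \<le> ((m - a) / m) * ((N - a) / (N - 2 * a))"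
  proof (rule mult_mono)
    show "(m - a - i) / (m - i) \<le> (m - a) / m" using p1 i1 by (simp add: divide_simps)
    show "(N - i) / (N - a - i) \<le> (N - a) / (N - 2 * a)" using p1 i2 by (simp add: divide_simps)
    show "0 \<le> (m - a) / m" using p1 assms by simp
    show "0 \<le> (N - i) / (N - a - i)" using p1 assms by simp
  qed
  also have "\<dots> = ((m - a) * (N - a)) / (m * (N - 2 * a))" by simp
  finally show ?thesis .
qed

lemma choose_second_ratio_le_power:
  fixes N m a :: nat
  assumes m: "2 * a \<le> m" "m \<le> N" and N: "2 * a < N"
  shows "real ((N - 2 * a) choose (m - 2 * a)) * real (N choose m) / (real ((N - a) choose (m - a)))\<^sup>2
         \<le> (((real m - real a) * (real N - real a)) / (real m * (real N - 2 * real a))) ^ a"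
proof -
  define P1 where "P1 = (\<Prod>i<a. real (N - i) / real (m - i))"
  define P2 where "P2 = (\<Prod>i<a. real (N - a - i) / real (m - a - i))"
  have e1: "real (N choose m) = real ((N - a) choose (m - a)) * P1"
    unfolding P1_def using m by (intro choose_eq_choose_diff_mult_prod) auto
  have e2: "real ((N - a) choose (m - a)) = real ((N - 2 * a) choose (m - 2 * a)) * P2"
  proof -
    have "real ((N - a) choose (m - a)) = real ((N - a - a) choose (m - a - a)) * P2"
      unfolding P2_def using m by (intro choose_eq_choose_diff_mult_prod) auto
    moreover have "N - a - a = N - 2 * a" "m - a - a = m - 2 * a" by auto
    ultimately show ?thesis by simp
  qed
  have B1: "real ((N - a) choose (m - a)) > 0" using m by simp
  have B0: "real ((N - 2 * a) choose (m - 2 * a)) > 0" using m by simp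
  have P2pos: "P2 > 0" using B1 B0 e2 by (metis zero_less_mult_pos)
  have "real ((N - 2 * a) choose (m - 2 * a)) * real (N choose m) / (real ((N - a) choose (m - a)))\<^sup>2 = P1 / P2"
  proof -
    have "real ((N - 2 * a) choose (m - 2 * a)) * real (N choose m) / (real ((N - a) choose (m - a)))\<^sup>2
        = real ((N - 2 * a) choose (m - 2 * a)) * P1 / real ((N - a) choose (m - a))"
      using B1 unfolding e1 by (simp add: power2_eq_square field_simps)
    also have "\<dots> = P1 / P2" unfolding e2 using B0 P2pos by (simp add: field_simps)
    finally show ?thesis .
  qed
  also have "\<dots> = (\<Prod>i<a. (real (N - i) / real (m - i)) / (real (N - a - i) / real (m - a - i)))"
    unfolding P1_def P2_def by (rule prod_dividef[symmetric])
  also have "\<dots> \<le> (\<Prod>i<a. ((real m - real a) * (real N - real a)) / (real m * (real N - 2 * real a)))"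
  proof (rule prod_mono, rule conjI)
    fix i assume i: "i \<in> {..<a}"
    have c: "real (N - i) = real N - real i" "real (m - i) = real m - real i"
      "real (N - a - i) = real N - real a - real i" "real (m - a - i) = real m - real a - real i"
      using i m N by (auto simp: of_nat_diff)
    show "0 \<le> (real (N - i) / real (m - i)) / (real (N - a - i) / real (m - a - i))" by simp
    show "(real (N - i) / real (m - i)) / (real (N - a - i) / real (m - a - i))
        \<le> ((real m - real a) * (real N - real a)) / (real m * (real N - 2 * real a))"
      unfolding c using i m N by (intro ratio_factor_le) auto
  qed
  also have "\<dots> = (((real m - real a) * (real N - real a)) / (real m * (real N - 2 * real a))) ^ a" by simp
  finally show ?thesis .
qed

lemma sum_PiE_pairs_prod:
  fixes h :: "'b \<Rightarrow> 'b \<Rightarrow> 'c :: comm_semiring_1"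
  assumes "finite I" "finite P"
  shows "(\<Sum>F\<in>PiE I (\<lambda>_. P). \<Sum>G\<in>PiE I (\<lambda>_. P). \<Prod>j\<in>I. h (F j) (G j)) = (\<Prod>j\<in>I. \<Sum>p\<in>P. \<Sum>q\<in>P. h p q)"
proof -
  have "(\<Sum>F\<in>PiE I (\<lambda>_. P). \<Sum>G\<in>PiE I (\<lambda>_. P). \<Prod>j\<in>I. h (F j) (G j))
      = (\<Sum>F\<in>PiE I (\<lambda>_. P). \<Prod>j\<in>I. \<Sum>q\<in>P. h (F j) q)"
    using assms by (intro sum.cong refl prod_sum_PiE[symmetric]) auto
  also have "\<dots> = (\<Prod>j\<in>I. \<Sum>p\<in>P. \<Sum>q\<in>P. h p q)"
    using assms by (intro prod_sum_PiE[symmetric]) auto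
  finally show ?thesis .
qed

section \<open>Pairs of permutations\<close>

lemma card_permutes_agreeing_le:
  assumes "finite K" "p permutes K" "T \<subseteq> K"
  shows "card {q. q permutes K \<and> (\<forall>t\<in>T. q t = p t)} \<le> fact (card K - card T)"
proof -
  let ?Q = "{q. q permutes K \<and> (\<forall>t\<in>T. q t = p t)}"
  have "inj_on (\<lambda>q. inv p \<circ> q) ?Q"
  proof (rule inj_onI)
    fix q1 q2 assume "inv p \<circ> q1 = inv p \<circ> q2"
    then have "p \<circ> (inv p \<circ> q1) = p \<circ> (inv p \<circ> q2)" by simp
    then show "q1 = q2" using permutes_inv_o(1)[OF assms(2)] by (simp add: o_assoc)
  qed
  moreover have "(\<lambda>q. inv p \<circ> q) ` ?Q \<subseteq> {r. r permutes (K - T)}"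
  proof clarify
    fix q assume q: "q permutes K" "\<forall>t\<in>T. q t = p t"
    have "inv p \<circ> q permutes K" by (intro permutes_compose q(1) permutes_inv assms(2))
    moreover have "\<forall>t\<in>T. (inv p \<circ> q) t = t" using q(2) permutes_inverses(2)[OF assms(2)] by simp
    ultimately show "inv p \<circ> q permutes (K - T)" by (auto intro: permutes_superset)
  qed
  moreover have "finite {r. r permutes (K - T)}" using assms(1) by (simp add: finite_permutations)
  ultimately have "card ?Q \<le> card {r. r permutes (K - T)}" by (rule card_inj_on_le)
  also have "\<dots> = fact (card K - card T)"
    using assms by (intro card_permutations) (auto simp: card_Diff_subset finite_subset)
  finally show ?thesis .
qed

lemma sum_permutes_pairs_power_agree_le:
  fixes x :: real
  assumes fin: "finite K" and x: "1 \<le> x"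
  shows "(\<Sum>p\<in>{p. p permutes K}. \<Sum>q\<in>{p. p permutes K}. x ^ card {i\<in>K. p i = q i})
         \<le> (fact (card K))\<^sup>2 * exp (x - 1)"
proof -
  define P where "P = {p. p permutes K}"
  define y where "y = x - 1"
  define n where "n = card K"
  have finP: "finite P" unfolding P_def using fin by (simp add: finite_permutations)
  have y: "0 \<le> y" using x unfolding y_def by simp
  have expand: "x ^ card {i\<in>K. p i = q i} = (\<Sum>T\<in>Pow K. if T \<subseteq> {i\<in>K. p i = q i} then y ^ card T else 0)"
    for p q :: "'a \<Rightarrow> 'a"
  proof -
    have "x ^ card {i\<in>K. p i = q i} = (\<Sum>T\<in>Pow {i\<in>K. p i = q i}. y ^ card T)"
      unfolding y_def using fin power_card_eq_sum_Pow[of "{i\<in>K. p i = q i}" "x - 1"] by simp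
    also have "\<dots> = (\<Sum>T\<in>{T\<in>Pow K. T \<subseteq> {i\<in>K. p i = q i}}. y ^ card T)"
      by (intro sum.cong) auto
    also have "\<dots> = (\<Sum>T\<in>Pow K. if T \<subseteq> {i\<in>K. p i = q i} then y ^ card T else 0)"
      using fin by (intro sum.inter_filter) auto
    finally show ?thesis .
  qed
  have count: "(\<Sum>q\<in>P. if T \<subseteq> {i\<in>K. p i = q i} then y ^ card T else 0) \<le> fact (n - card T) * y ^ card T"
    if T: "T \<subseteq> K" and p: "p \<in> P" for T p
  proof -
    have "{q\<in>P. T \<subseteq> {i\<in>K. p i = q i}} = {q. q permutes K \<and> (\<forall>t\<in>T. q t = p t)}"
      using T unfolding P_def by auto
    then have card_le: "card {q\<in>P. T \<subseteq> {i\<in>K. p i = q i}} \<le> fact (n - card T)"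
      using card_permutes_agreeing_le[OF fin _ T, of p] p unfolding P_def n_def by simp
    have "real (card {q\<in>P. T \<subseteq> {i\<in>K. p i = q i}}) \<le> fact (n - card T)"
      using of_nat_mono[OF card_le, where 'a = real] by simp
    then show ?thesis using y finP by (simp add: sum.inter_filter[symmetric] mult_right_mono)
  qed
  have "(\<Sum>p\<in>P. \<Sum>q\<in>P. x ^ card {i\<in>K. p i = q i})
      = (\<Sum>p\<in>P. \<Sum>T\<in>Pow K. \<Sum>q\<in>P. if T \<subseteq> {i\<in>K. p i = q i} then y ^ card T else 0)"
    unfolding expand by (intro sum.cong refl sum.swap)
  also have "\<dots> = (\<Sum>T\<in>Pow K. \<Sum>p\<in>P. \<Sum>q\<in>P. if T \<subseteq> {i\<in>K. p i = q i} then y ^ card T else 0)"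
    by (rule sum.swap)
  also have "\<dots> \<le> (\<Sum>T\<in>Pow K. \<Sum>p\<in>P. fact (n - card T) * y ^ card T)"
    by (intro sum_mono count) auto
  also have "\<dots> = fact n * (\<Sum>T\<in>Pow K. fact (n - card T) * y ^ card T)"
    using fin unfolding P_def n_def by (simp add: card_permutations sum_distrib_left)
  also have "\<dots> = (fact n)\<^sup>2 * (\<Sum>t\<le>n. y ^ t / fact t)"
    unfolding n_def sum_Pow_fact_diff_card_mult_power[OF fin] by (simp add: power2_eq_square)
  also have "\<dots> \<le> (fact n)\<^sup>2 * exp y"
    using sum_power_div_fact_le_exp[OF y] by (intro mult_left_mono) auto
  finally show ?thesis unfolding P_def y_def n_def .
qed

section \<open>Derangements of the layered digraph\<close>

lemma finite_Dverts: "finite (Dverts k l)"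
  unfolding Dverts_def by simp

lemma card_Dverts: "card (Dverts k l) = k * l"
  unfolding Dverts_def by (simp add: card_cartesian_product)

lemma finite_Darcs: "finite (Darcs k l)"
  using finite_subset[of "Darcs k l" "Dverts k l \<times> Dverts k l"] finite_Dverts
  unfolding Darcs_def by auto

lemma card_Darcs:
  assumes "l \<ge> 1"
  shows "card (Darcs k l) = k * k * l"
proof -
  have "Darcs k l = (SIGMA u:Dverts k l. {..<k} \<times> {(snd u + 1) mod l})"
    using assms unfolding Darcs_def Dverts_def by auto
  then show ?thesis
    using finite_Dverts by (simp add: card_SigmaI card_cartesian_product card_Dverts)
qed

abbreviation Dderangements :: "nat \<Rightarrow> nat \<Rightarrow> (nat \<times> nat \<Rightarrow> nat \<times> nat) set" where
  "Dderangements k l \<equiv> digraph_derangements (Dverts k l) (Darcs k l)"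

abbreviation layer_perm_tuples :: "nat \<Rightarrow> nat \<Rightarrow> (nat \<Rightarrow> nat \<Rightarrow> nat) set" where
  "layer_perm_tuples k l \<equiv> PiE {..<l} (\<lambda>_. {p. p permutes {..<k}})"

lemma mem_Dderangements_iff:
  "f \<in> Dderangements k l \<longleftrightarrow> bij_betw f (Dverts k l) (Dverts k l)
     \<and> (\<forall>v\<in>Dverts k l. (v, f v) \<in> Darcs k l \<and> f v \<noteq> v) \<and> (\<forall>v. v \<notin> Dverts k l \<longrightarrow> f v = v)"
  unfolding digraph_derangements_def digraph_perms_def by blast

lemma mem_digraph_derangements_subgraph_iff:
  assumes "E \<subseteq> Darcs k l"
  shows "f \<in> digraph_derangements (Dverts k l) E \<longleftrightarrow> f \<in> Dderangements k l \<and> (\<forall>v\<in>Dverts k l. (v, f v) \<in> E)"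
  using assms unfolding digraph_derangements_def digraph_perms_def by auto

lemma Dderangement_step:
  assumes "f \<in> Dderangements k l" "v \<in> Dverts k l"
  shows "f v \<in> Dverts k l" "snd (f v) = (snd v + 1) mod l"
  using assms(1)[unfolded mem_Dderangements_iff] assms(2) unfolding Darcs_def by auto

lemma Dderangement_outside: "f \<in> Dderangements k l \<Longrightarrow> v \<notin> Dverts k l \<Longrightarrow> f v = v"
  unfolding mem_Dderangements_iff by blast

definition layer_perms :: "nat \<Rightarrow> nat \<Rightarrow> (nat \<times> nat \<Rightarrow> nat \<times> nat) \<Rightarrow> nat \<Rightarrow> nat \<Rightarrow> nat" where
  "layer_perms k l f = restrict (\<lambda>j i. if i < k then fst (f (i, j)) else i) {..<l}"

definition of_layer_perms :: "nat \<Rightarrow> nat \<Rightarrow> (nat \<Rightarrow> nat \<Rightarrow> nat) \<Rightarrow> nat \<times> nat \<Rightarrow> nat \<times> nat" where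
  "of_layer_perms k l F = (\<lambda>v. if v \<in> Dverts k l then (F (snd v) (fst v), (snd v + 1) mod l) else v)"

lemma layer_perms_apply: "j < l \<Longrightarrow> i < k \<Longrightarrow> layer_perms k l f j i = fst (f (i, j))"
  unfolding layer_perms_def by simp

lemma of_layer_perms_apply: "i < k \<Longrightarrow> j < l \<Longrightarrow> of_layer_perms k l F (i, j) = (F j i, (j + 1) mod l)"
  unfolding of_layer_perms_def Dverts_def by simp

lemma layer_perms_permutes:
  assumes f: "f \<in> Dderangements k l" and j: "j < l"
  shows "layer_perms k l f j permutes {..<k}"
proof -
  let ?g = "\<lambda>i. if i < k then fst (f (i, j)) else i"
  have g: "layer_perms k l f j = ?g" unfolding layer_perms_def using j by simp
  have inj: "inj_on ?g {..<k}"
  proof (rule inj_onI)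
    fix a b assume ab: "a \<in> {..<k}" "b \<in> {..<k}" "?g a = ?g b"
    have va: "(a, j) \<in> Dverts k l" and vb: "(b, j) \<in> Dverts k l" using ab j by (auto simp: Dverts_def)
    have "f (a, j) = f (b, j)"
      using ab Dderangement_step(2)[OF f va] Dderangement_step(2)[OF f vb] by (simp add: prod_eq_iff)
    then have "(a, j) = (b, j)" using f va vb unfolding mem_Dderangements_iff bij_betw_def inj_on_def by blast
    then show "a = b" by simp
  qed
  have "fst (f (i, j)) < k" if "i < k" for i
    using Dderangement_step(1)[OF f, of "(i, j)"] that j by (auto simp: Dverts_def mem_Times_iff)
  then have sub: "?g ` {..<k} \<subseteq> {..<k}" by auto
  have "bij_betw ?g {..<k} {..<k}"
    using endo_inj_surj[OF _ sub inj] inj by (simp add: bij_betw_def)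
  then have "?g permutes {..<k}" by (rule bij_imp_permutes) simp
  then show ?thesis using g by simp
qed

lemma inj_on_layer_perms: "inj_on (layer_perms k l) (Dderangements k l)"
proof (rule inj_onI, rule ext)
  fix f g v assume f: "f \<in> Dderangements k l" and g: "g \<in> Dderangements k l"
    and eq: "layer_perms k l f = layer_perms k l g"
  show "f v = g v"
  proof (cases "v \<in> Dverts k l")
    case True
    obtain i j where v: "v = (i, j)" "i < k" "j < l" using True by (auto simp: Dverts_def)
    have "fst (f v) = fst (g v)"
      using v layer_perms_apply[of j l i k f] layer_perms_apply[of j l i k g] eq by simp
    moreover have "snd (f v) = snd (g v)" using Dderangement_step(2)[OF f True] Dderangement_step(2)[OF g True] by simp
    ultimately show ?thesis by (simp add: prod_eq_iff)
  next
    case False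
    then show ?thesis using Dderangement_outside[OF f] Dderangement_outside[OF g] by simp
  qed
qed

lemma layer_perms_of_layer_perms:
  assumes F: "F \<in> layer_perm_tuples k l"
  shows "layer_perms k l (of_layer_perms k l F) = F"
proof (rule ext)+
  fix j i
  show "layer_perms k l (of_layer_perms k l F) j i = F j i"
  proof (cases "j < l")
    case True
    have "F j i = i" if "\<not> i < k" using permutes_not_in[of "F j" "{..<k}" i] F True that by auto
    then show ?thesis using True of_layer_perms_apply[of i k j l F] by (auto simp: layer_perms_def)
  next
    case False
    then show ?thesis using F by (simp add: layer_perms_def PiE_def extensional_def)
  qed
qed

lemma of_layer_perms_in_Dderangements:
  assumes l: "l \<ge> 2" and F: "F \<in> layer_perm_tuples k l"
  shows "of_layer_perms k l F \<in> Dderangements k l"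
proof -
  let ?h = "of_layer_perms k l F"
  have Fp: "F j permutes {..<k}" if "j < l" for j using F that by auto
  have inj: "inj_on ?h (Dverts k l)"
  proof (rule inj_onI)
    fix u w assume u: "u \<in> Dverts k l" and w: "w \<in> Dverts k l" and e: "?h u = ?h w"
    obtain i j where ui: "u = (i, j)" "i < k" "j < l" using u by (auto simp: Dverts_def)
    obtain i' j' where wi: "w = (i', j')" "i' < k" "j' < l" using w by (auto simp: Dverts_def)
    have "(j + 1) mod l = (j' + 1) mod l" using e ui wi of_layer_perms_apply by simp
    then have jj: "j = j'" using ui wi by (auto simp: mod_Suc split: if_splits)
    have "F j i = F j i'" using e ui wi of_layer_perms_apply jj by simp
    then have "i = i'" using permutes_inj[OF Fp[OF ui(3)]] unfolding inj_def by blast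
    then show "u = w" using ui wi jj by simp
  qed
  have sub: "?h ` Dverts k l \<subseteq> Dverts k l"
  proof
    fix x assume "x \<in> ?h ` Dverts k l"
    then obtain i j where ij: "x = ?h (i, j)" "i < k" "j < l" by (auto simp: Dverts_def)
    then have "F j i < k" using permutes_in_image[OF Fp] by simp
    then show "x \<in> Dverts k l" using ij l of_layer_perms_apply by (simp add: Dverts_def)
  qed
  have bij: "bij_betw ?h (Dverts k l) (Dverts k l)"
    using endo_inj_surj[OF finite_Dverts sub inj] inj by (simp add: bij_betw_def)
  have moves: "?h v \<noteq> v" if v: "v \<in> Dverts k l" for v
  proof -
    obtain i j where ij: "v = (i, j)" "i < k" "j < l" using v by (auto simp: Dverts_def)
    have "(j + 1) mod l \<noteq> j" using ij(3) l by (cases "j + 1 = l") auto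
    then show ?thesis using ij of_layer_perms_apply by simp
  qed
  have "(v, ?h v) \<in> Darcs k l" if "v \<in> Dverts k l" for v
    using that sub by (auto simp: Darcs_def of_layer_perms_def)
  then show ?thesis
    unfolding mem_Dderangements_iff using bij moves by (simp add: of_layer_perms_def)
qed

lemma bij_betw_layer_perms:
  assumes "l \<ge> 2"
  shows "bij_betw (layer_perms k l) (Dderangements k l) (layer_perm_tuples k l)"
proof (rule bij_betw_imageI[OF inj_on_layer_perms])
  have "F \<in> layer_perms k l ` Dderangements k l" if "F \<in> layer_perm_tuples k l" for F
    by (intro image_eqI[where x = "of_layer_perms k l F"] of_layer_perms_in_Dderangements[OF assms that])
      (simp add: layer_perms_of_layer_perms[OF that])
  moreover have "layer_perms k l f \<in> layer_perm_tuples k l" if "f \<in> Dderangements k l" for f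
    using that layer_perms_permutes by (auto simp: layer_perms_def)
  ultimately show "layer_perms k l ` Dderangements k l = layer_perm_tuples k l" by blast
qed

lemma card_Dderangements:
  assumes "l \<ge> 2"
  shows "card (Dderangements k l) = fact k ^ l"
  using bij_betw_same_card[OF bij_betw_layer_perms[OF assms]]
  by (simp add: card_PiE card_permutations)

lemma finite_Dderangements: "l \<ge> 2 \<Longrightarrow> finite (Dderangements k l)"
  using card_Dderangements[of l k] card.infinite[of "Dderangements k l"] by (metis fact_nonzero power_not_zero)

lemma card_agree_eq_sum_layers:
  assumes f: "f \<in> Dderangements k l" and g: "g \<in> Dderangements k l"
  shows "card {v\<in>Dverts k l. f v = g v} = (\<Sum>j<l. card {i\<in>{..<k}. layer_perms k l f j i = layer_perms k l g j i})"
proof -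
  define A where "A j = {i\<in>{..<k}. layer_perms k l f j i = layer_perms k l g j i}" for j
  have eq: "{v\<in>Dverts k l. f v = g v} = (\<Union>j<l. (\<lambda>i. (i, j)) ` A j)"
  proof (intro set_eqI iffI)
    fix v assume v: "v \<in> {v\<in>Dverts k l. f v = g v}"
    then obtain i j where ij: "v = (i, j)" "i < k" "j < l" by (auto simp: Dverts_def)
    have "layer_perms k l f j i = layer_perms k l g j i" using v ij layer_perms_apply[of j l i k] by simp
    then show "v \<in> (\<Union>j<l. (\<lambda>i. (i, j)) ` A j)" using ij unfolding A_def by blast
  next
    fix v assume "v \<in> (\<Union>j<l. (\<lambda>i. (i, j)) ` A j)"
    then obtain i j where ij: "v = (i, j)" "i < k" "j < l" "layer_perms k l f j i = layer_perms k l g j i"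
      unfolding A_def by blast
    have vV: "v \<in> Dverts k l" using ij by (simp add: Dverts_def)
    have "fst (f v) = fst (g v)" using ij layer_perms_apply[of j l i k] by simp
    moreover have "snd (f v) = snd (g v)" using Dderangement_step(2)[OF f vV] Dderangement_step(2)[OF g vV] by simp
    ultimately show "v \<in> {v\<in>Dverts k l. f v = g v}" using vV by (simp add: prod_eq_iff)
  qed
  have "card (\<Union>j<l. (\<lambda>i. (i, j)) ` A j) = (\<Sum>j<l. card ((\<lambda>i. (i, j)) ` A j))"
    by (intro card_UN_disjoint) (auto simp: A_def)
  also have "\<dots> = (\<Sum>j<l. card (A j))"
    by (intro sum.cong refl card_image) (auto simp: inj_on_def)
  finally show ?thesis unfolding eq A_def .
qed

lemma sum_Dderangement_pairs_power_agree_le: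
  fixes x :: real
  assumes l: "l \<ge> 2" and x: "x \<ge> 1"
  shows "(\<Sum>f\<in>Dderangements k l. \<Sum>g\<in>Dderangements k l. x ^ card {v\<in>Dverts k l. f v = g v})
         \<le> (real (card (Dderangements k l)))\<^sup>2 * exp (real l * (x - 1))"
proof -
  define P where "P = {p. p permutes {..<k::nat}}"
  define h where "h p q = x ^ card {i\<in>{..<k}. p i = q i}" for p q :: "nat \<Rightarrow> nat"
  have finP: "finite P" unfolding P_def by (simp add: finite_permutations)
  have bij: "bij_betw (layer_perms k l) (Dderangements k l) (PiE {..<l} (\<lambda>_. P))"
    unfolding P_def by (rule bij_betw_layer_perms[OF l])
  have step1: "x ^ card {v\<in>Dverts k l. f v = g v} = (\<Prod>j<l. h (layer_perms k l f j) (layer_perms k l g j))"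
    if "f \<in> Dderangements k l" "g \<in> Dderangements k l" for f g
    unfolding card_agree_eq_sum_layers[OF that] power_sum h_def ..
  have "(\<Sum>f\<in>Dderangements k l. \<Sum>g\<in>Dderangements k l. x ^ card {v\<in>Dverts k l. f v = g v})
      = (\<Sum>f\<in>Dderangements k l. \<Sum>g\<in>Dderangements k l. \<Prod>j<l. h (layer_perms k l f j) (layer_perms k l g j))"
    by (intro sum.cong refl step1)
  also have "\<dots> = (\<Sum>f\<in>Dderangements k l. \<Sum>G\<in>PiE {..<l} (\<lambda>_. P). \<Prod>j<l. h (layer_perms k l f j) (G j))"
    by (intro sum.cong refl sum.reindex_bij_betw bij)
  also have "\<dots> = (\<Sum>F\<in>PiE {..<l} (\<lambda>_. P). \<Sum>G\<in>PiE {..<l} (\<lambda>_. P). \<Prod>j<l. h (F j) (G j))"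
    by (rule sum.reindex_bij_betw[OF bij, of "\<lambda>F. \<Sum>G\<in>PiE {..<l} (\<lambda>_. P). \<Prod>j<l. h (F j) (G j)"])
  also have "\<dots> = (\<Prod>j<l. \<Sum>p\<in>P. \<Sum>q\<in>P. h p q)"
    using finP by (intro sum_PiE_pairs_prod) auto
  also have "\<dots> \<le> (\<Prod>j<l. (fact k)\<^sup>2 * exp (x - 1))"
  proof (intro prod_mono conjI)
    fix j
    show "0 \<le> (\<Sum>p\<in>P. \<Sum>q\<in>P. h p q)" unfolding h_def using x by (intro sum_nonneg) simp
    show "(\<Sum>p\<in>P. \<Sum>q\<in>P. h p q) \<le> (fact k)\<^sup>2 * exp (x - 1)"
      using sum_permutes_pairs_power_agree_le[of "{..<k}" x] x unfolding P_def h_def by simp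
  qed
  also have "\<dots> = ((fact k)\<^sup>2 * exp (x - 1)) ^ l" by simp
  also have "\<dots> = (real (card (Dderangements k l)))\<^sup>2 * exp (real l * (x - 1))"
    unfolding card_Dderangements[OF l] exp_of_nat_mult power_mult_distrib
    by (simp add: power_mult[symmetric] mult.commute)
  finally show ?thesis .
qed

section \<open>Moments of the number of derangements\<close>

lemma sum_indicator_eq_card:
  "finite A \<Longrightarrow> (\<Sum>x\<in>A. if P x then 1 else 0) = (of_nat (card {x\<in>A. P x}) :: 'b :: semiring_1)"
  using sum.inter_filter[of A "\<lambda>_. 1 :: 'b" P] by simp

definition arcs_of :: "nat \<Rightarrow> nat \<Rightarrow> (nat \<times> nat \<Rightarrow> nat \<times> nat) \<Rightarrow> ((nat \<times> nat) \<times> nat \<times> nat) set" where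
  "arcs_of k l f = (\<lambda>v. (v, f v)) ` Dverts k l"

lemma arcs_of_subset_Darcs: "f \<in> Dderangements k l \<Longrightarrow> arcs_of k l f \<subseteq> Darcs k l"
  unfolding arcs_of_def mem_Dderangements_iff by blast

lemma card_arcs_of: "card (arcs_of k l f) = k * l"
  unfolding arcs_of_def by (subst card_image) (auto simp: inj_on_def card_Dverts)

lemma card_agree_le: "card {v\<in>Dverts k l. f v = g v} \<le> k * l"
  using card_mono[OF finite_Dverts, of "{v\<in>Dverts k l. f v = g v}"] card_Dverts by auto

lemma card_arcs_of_Un:
  "card (arcs_of k l f \<union> arcs_of k l g) = 2 * (k * l) - card {v\<in>Dverts k l. f v = g v}"
proof -
  have fin: "finite (arcs_of k l f)" "finite (arcs_of k l g)"
    unfolding arcs_of_def using finite_Dverts by auto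
  have "arcs_of k l f \<inter> arcs_of k l g = (\<lambda>v. (v, f v)) ` {v\<in>Dverts k l. f v = g v}"
    unfolding arcs_of_def by auto
  then have "card (arcs_of k l f \<inter> arcs_of k l g) = card {v\<in>Dverts k l. f v = g v}"
    by (simp add: card_image inj_on_def)
  then show ?thesis using card_Un_Int[OF fin] by (simp add: card_arcs_of)
qed

lemma num_der_eq_sum:
  assumes l: "l \<ge> 2" and E: "E \<subseteq> Darcs k l"
  shows "num_der k l E = (\<Sum>f\<in>Dderangements k l. if arcs_of k l f \<subseteq> E then 1 else 0)"
proof -
  have "digraph_derangements (Dverts k l) E = {f\<in>Dderangements k l. arcs_of k l f \<subseteq> E}"
    using mem_digraph_derangements_subgraph_iff[OF E] unfolding arcs_of_def by blast
  then show ?thesis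
    unfolding num_der_def using finite_Dderangements[OF l] by (simp add: sum_indicator_eq_card)
qed

lemma finite_Dsubgraphs: "finite (Dsubgraphs k l m)"
  using finite_Darcs by (simp add: Dsubgraphs_def)

lemma card_Dsubgraphs: "l \<ge> 1 \<Longrightarrow> card (Dsubgraphs k l m) = (k * k * l) choose m"
  unfolding Dsubgraphs_def using n_subsets[OF finite_Darcs] card_Darcs by simp

lemma Dsubgraphs_nonempty: "l \<ge> 1 \<Longrightarrow> m \<le> k * k * l \<Longrightarrow> Dsubgraphs k l m \<noteq> {}"
  using card_Dsubgraphs[of l k m] by (metis card.empty zero_less_binomial less_numeral_extra(3))

lemma expectation_G_rand:
  assumes "l \<ge> 1" "m \<le> k * k * l"
  shows "measure_pmf.expectation (G_rand k l m) F = (\<Sum>E\<in>Dsubgraphs k l m. F E) / real ((k * k * l) choose m)"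
  unfolding G_rand_def integral_pmf_of_set[OF Dsubgraphs_nonempty[OF assms] finite_Dsubgraphs]
    card_Dsubgraphs[OF assms(1)] ..

lemma sum_Dsubgraphs_supersets:
  assumes "S \<subseteq> Darcs k l" "card S \<le> m" "l \<ge> 1"
  shows "(\<Sum>E\<in>Dsubgraphs k l m. if S \<subseteq> E then 1 else 0) = real ((k * k * l - card S) choose (m - card S))"
proof -
  have "{E\<in>Dsubgraphs k l m. S \<subseteq> E} = {E. E \<subseteq> Darcs k l \<and> card E = m \<and> S \<subseteq> E}"
    unfolding Dsubgraphs_def by auto
  then have "card {E\<in>Dsubgraphs k l m. S \<subseteq> E} = (k * k * l - card S) choose (m - card S)"
    using card_supersets_eq_choose[OF finite_Darcs assms(1,2)] card_Darcs[OF assms(3)] by simp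
  then show ?thesis using finite_Dsubgraphs by (simp add: sum_indicator_eq_card)
qed

lemma expectation_num_der:
  assumes l: "l \<ge> 2" and m: "k * l \<le> m" "m \<le> k * k * l"
  shows "measure_pmf.expectation (G_rand k l m) (num_der k l)
    = fact k ^ l * real ((k * k * l - k * l) choose (m - k * l)) / real ((k * k * l) choose m)"
proof -
  have "(\<Sum>E\<in>Dsubgraphs k l m. num_der k l E)
      = (\<Sum>E\<in>Dsubgraphs k l m. \<Sum>f\<in>Dderangements k l. if arcs_of k l f \<subseteq> E then 1 else 0)"
    by (intro sum.cong refl num_der_eq_sum[OF l]) (auto simp: Dsubgraphs_def)
  also have "\<dots> = (\<Sum>f\<in>Dderangements k l. \<Sum>E\<in>Dsubgraphs k l m. if arcs_of k l f \<subseteq> E then 1 else 0)"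
    by (rule sum.swap)
  also have "\<dots> = (\<Sum>f\<in>Dderangements k l. real ((k * k * l - k * l) choose (m - k * l)))"
    using sum_Dsubgraphs_supersets[OF arcs_of_subset_Darcs, of _ k l m] m l
    by (intro sum.cong refl) (simp add: card_arcs_of)
  also have "\<dots> = fact k ^ l * real ((k * k * l - k * l) choose (m - k * l))"
    using card_Dderangements[OF l] by simp
  finally show ?thesis using l m by (simp add: expectation_G_rand)
qed

lemma num_der_sq_eq_sum:
  assumes l: "l \<ge> 2" and E: "E \<subseteq> Darcs k l"
  shows "(num_der k l E)\<^sup>2
    = (\<Sum>f\<in>Dderangements k l. \<Sum>g\<in>Dderangements k l. if arcs_of k l f \<union> arcs_of k l g \<subseteq> E then 1 else 0)"
  unfolding num_der_eq_sum[OF assms] power2_eq_square sum_product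
  by (intro sum.cong refl) auto

lemma expectation_num_der_sq:
  assumes l: "l \<ge> 2" and m: "2 * (k * l) \<le> m" "m \<le> k * k * l"
  shows "measure_pmf.expectation (G_rand k l m) (\<lambda>E. (num_der k l E)\<^sup>2) =
    (\<Sum>f\<in>Dderangements k l. \<Sum>g\<in>Dderangements k l.
       real ((k * k * l - 2 * (k * l) + card {v\<in>Dverts k l. f v = g v})
         choose (m - 2 * (k * l) + card {v\<in>Dverts k l. f v = g v}))) / real ((k * k * l) choose m)"
proof -
  have pair: "(\<Sum>E\<in>Dsubgraphs k l m. if arcs_of k l f \<union> arcs_of k l g \<subseteq> E then 1 else 0)
      = real ((k * k * l - 2 * (k * l) + card {v\<in>Dverts k l. f v = g v})
         choose (m - 2 * (k * l) + card {v\<in>Dverts k l. f v = g v}))"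
    if f: "f \<in> Dderangements k l" and g: "g \<in> Dderangements k l" for f g
  proof -
    define c where "c = card {v\<in>Dverts k l. f v = g v}"
    have c: "c \<le> k * l" unfolding c_def by (rule card_agree_le)
    have union: "card (arcs_of k l f \<union> arcs_of k l g) = 2 * (k * l) - c"
      unfolding c_def by (rule card_arcs_of_Un)
    have "arcs_of k l f \<union> arcs_of k l g \<subseteq> Darcs k l"
      using arcs_of_subset_Darcs[OF f] arcs_of_subset_Darcs[OF g] by auto
    then have "(\<Sum>E\<in>Dsubgraphs k l m. if arcs_of k l f \<union> arcs_of k l g \<subseteq> E then 1 else 0)
        = real ((k * k * l - (2 * (k * l) - c)) choose (m - (2 * (k * l) - c)))"
      unfolding union[symmetric] by (rule sum_Dsubgraphs_supersets) (use union m l in auto)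
    also have "k * k * l - (2 * (k * l) - c) = k * k * l - 2 * (k * l) + c" using c m by simp
    also have "m - (2 * (k * l) - c) = m - 2 * (k * l) + c" using c m by simp
    finally show ?thesis unfolding c_def .
  qed
  have "(\<Sum>E\<in>Dsubgraphs k l m. (num_der k l E)\<^sup>2)
      = (\<Sum>E\<in>Dsubgraphs k l m. \<Sum>f\<in>Dderangements k l. \<Sum>g\<in>Dderangements k l.
           if arcs_of k l f \<union> arcs_of k l g \<subseteq> E then 1 else 0)"
    by (intro sum.cong refl num_der_sq_eq_sum[OF l]) (auto simp: Dsubgraphs_def)
  also have "\<dots> = (\<Sum>f\<in>Dderangements k l. \<Sum>g\<in>Dderangements k l. \<Sum>E\<in>Dsubgraphs k l m.
           if arcs_of k l f \<union> arcs_of k l g \<subseteq> E then 1 else 0)"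
    by (subst sum.swap) (intro sum.cong refl sum.swap)
  also have "\<dots> = (\<Sum>f\<in>Dderangements k l. \<Sum>g\<in>Dderangements k l.
       real ((k * k * l - 2 * (k * l) + card {v\<in>Dverts k l. f v = g v})
         choose (m - 2 * (k * l) + card {v\<in>Dverts k l. f v = g v})))"
    by (intro sum.cong refl pair)
  finally show ?thesis using l m by (simp add: expectation_G_rand)
qed

lemma expectation_sq_le_expectation_power2:
  fixes X :: "'a \<Rightarrow> real"
  assumes "finite (set_pmf M)"
  shows "(measure_pmf.expectation M X)\<^sup>2 \<le> measure_pmf.expectation M (\<lambda>x. (X x)\<^sup>2)"
  using measure_pmf.variance_positive[of M X]
    measure_pmf.variance_eq[OF integrable_measure_pmf_finite integrable_measure_pmf_finite, OF assms assms]
  by simp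

lemma expectation_num_der_sq_le:
  fixes k l m :: nat
  defines "a \<equiv> k * l" and "N \<equiv> k * k * l"
  assumes l: "l \<ge> 2" and m: "2 * a \<le> m" "m \<le> N" and N: "2 * a < N"
  shows "measure_pmf.expectation (G_rand k l m) (\<lambda>E. (num_der k l E)\<^sup>2)
    \<le> (measure_pmf.expectation (G_rand k l m) (num_der k l))\<^sup>2
      * ((((real m - real a) * (real N - real a)) / (real m * (real N - 2 * real a))) ^ a
      * exp (real l * ((real (N - 2 * a) + 1) / (real (m - 2 * a) + 1) - 1)))"
proof -
  define D :: real where "D = fact k ^ l"
  define C0 where "C0 = real (N choose m)"
  define B1 where "B1 = real ((N - a) choose (m - a))"
  define X where "X = real ((N - 2 * a) choose (m - 2 * a))"
  define \<rho> where "\<rho> = (real (N - 2 * a) + 1) / (real (m - 2 * a) + 1)"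
  have pos: "0 < C0" "0 < B1" "0 < X" unfolding C0_def B1_def X_def using m by simp_all
  have "1 \<le> \<rho>" unfolding \<rho>_def using m by (simp add: field_simps)
  have E1: "measure_pmf.expectation (G_rand k l m) (num_der k l) = D * B1 / C0"
    using expectation_num_der[OF l] m unfolding D_def B1_def C0_def a_def N_def by simp
  have "(\<Sum>f\<in>Dderangements k l. \<Sum>g\<in>Dderangements k l.
          real ((N - 2 * a + card {v\<in>Dverts k l. f v = g v}) choose (m - 2 * a + card {v\<in>Dverts k l. f v = g v})))
      \<le> (\<Sum>f\<in>Dderangements k l. \<Sum>g\<in>Dderangements k l. X * \<rho> ^ card {v\<in>Dverts k l. f v = g v})"
    unfolding X_def \<rho>_def using m by (intro sum_mono choose_add_le_mult_power) simp
  also have "\<dots> = X * (\<Sum>f\<in>Dderangements k l. \<Sum>g\<in>Dderangements k l. \<rho> ^ card {v\<in>Dverts k l. f v = g v})"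
    by (simp add: sum_distrib_left)
  also have "\<dots> \<le> X * (D\<^sup>2 * exp (real l * (\<rho> - 1)))"
    using sum_Dderangement_pairs_power_agree_le[OF l \<open>1 \<le> \<rho>\<close>, of k] pos
    unfolding D_def card_Dderangements[OF l] by (intro mult_left_mono) auto
  finally have "measure_pmf.expectation (G_rand k l m) (\<lambda>E. (num_der k l E)\<^sup>2)
      \<le> X * (D\<^sup>2 * exp (real l * (\<rho> - 1))) / C0"
    using expectation_num_der_sq[OF l] m pos unfolding a_def N_def C0_def
    by (simp add: divide_right_mono)
  also have "\<dots> = (D * B1 / C0)\<^sup>2 * (X * C0 / B1\<^sup>2) * exp (real l * (\<rho> - 1))"
    using pos by (simp add: field_simps power2_eq_square)
  also have "\<dots> \<le> (D * B1 / C0)\<^sup>2 * (((real m - real a) * (real N - real a)) / (real m * (real N - 2 * real a))) ^ a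
      * exp (real l * (\<rho> - 1))"
    using choose_second_ratio_le_power[OF m N]
    unfolding X_def C0_def B1_def by (intro mult_right_mono mult_left_mono) auto
  finally show ?thesis unfolding E1 \<rho>_def by (simp add: mult.assoc)
qed

section \<open>Asymptotics\<close>

lemma m_of_bounds:
  assumes "0 < p"
  shows "real (m_of p k l) \<le> p * (real k)\<^sup>2 * real l" "p * (real k)\<^sup>2 * real l - 1 < real (m_of p k l)"
proof -
  have "real (m_of p k l) = real_of_int \<lfloor>p * real (k\<^sup>2 * l)\<rfloor>"
    unfolding m_of_def using assms by simp
  then show "real (m_of p k l) \<le> p * (real k)\<^sup>2 * real l" "p * (real k)\<^sup>2 * real l - 1 < real (m_of p k l)"
    by (simp_all add: mult.assoc)
qed

lemma m_of_window:
  assumes p: "0 < p" "p < 1" and l: "2 \<le> l" and k: "3 \<le> k" "3 \<le> p * real k"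
  shows "2 * (k * l) \<le> m_of p k l" "m_of p k l \<le> k * k * l" "2 * (k * l) < k * k * l"
proof -
  have "1 * 1 \<le> real k * real l" using k l by (intro mult_mono) auto
  then have KL: "1 \<le> real k * real l" by simp
  have "3 * (real k * real l) \<le> (p * real k) * (real k * real l)" using k KL by (intro mult_right_mono) auto
  then have "real (2 * (k * l)) < real (m_of p k l)"
    using m_of_bounds(2)[OF p(1), of k l] KL by (simp add: power2_eq_square algebra_simps)
  then show "2 * (k * l) \<le> m_of p k l" by (meson of_nat_less_iff less_imp_le)
  have "p * (real k)\<^sup>2 * real l \<le> 1 * (real k)\<^sup>2 * real l" using p by (intro mult_right_mono) auto
  then show "m_of p k l \<le> k * k * l"
    using m_of_bounds(1)[OF p(1), of k l] unfolding of_nat_le_iff[symmetric, where 'a = real]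
    by (simp add: power2_eq_square)
  have "2 * (k * l) < 3 * (k * l)" using k l by simp
  also have "\<dots> \<le> k * (k * l)" using k by (intro mult_right_mono) auto
  finally show "2 * (k * l) < k * k * l" by (simp add: mult.assoc)
qed

definition moment_ratio_majorant :: "real \<Rightarrow> nat \<Rightarrow> nat \<Rightarrow> real" where
  "moment_ratio_majorant p l k =
     (((1 - 1 / (p * real k)) * ((real k - 1) / (real k - 2))) ^ k) ^ l
     * exp (real l * (((real k)\<^sup>2 * real l - 2 * real k * real l + 1)
                      / (p * (real k)\<^sup>2 * real l - 2 * real k * real l) - 1))"

lemma tendsto_moment_ratio_majorant:
  assumes p: "0 < p" "p < 1" and l: "2 \<le> l"
  shows "moment_ratio_majorant p l \<longlonglongrightarrow> 1"
proof -
  have L: "2 \<le> real l" using l by simp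
  have "(\<lambda>k. ((1 - 1 / (p * real k)) * ((real k - 1) / (real k - 2))) ^ k) \<longlonglongrightarrow> exp (1 - inverse p)"
    using p by real_asymp
  moreover have "(\<lambda>k. ((real k)\<^sup>2 * real l - 2 * real k * real l + 1) / (p * (real k)\<^sup>2 * real l - 2 * real k * real l))
      \<longlonglongrightarrow> real l * (inverse p * inverse (real l))"
    using p L by real_asymp
  ultimately have "moment_ratio_majorant p l
      \<longlonglongrightarrow> exp (1 - inverse p) ^ l * exp (real l * (real l * (inverse p * inverse (real l)) - 1))"
    unfolding moment_ratio_majorant_def by (intro tendsto_intros)
  also have "exp (1 - inverse p) ^ l * exp (real l * (real l * (inverse p * inverse (real l)) - 1)) = 1"
    using L by (simp flip: exp_of_nat_mult exp_add add: algebra_simps)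
  finally show ?thesis .
qed

lemma moment_ratio_base_le:
  fixes K L M p :: real
  assumes K: "3 \<le> K" and L: "0 < L" and p: "0 < p" and M: "2 * (K * L) \<le> M" "M \<le> p * K\<^sup>2 * L"
  shows "0 \<le> ((M - K * L) * (K * K * L - K * L)) / (M * (K * K * L - 2 * (K * L)))"
    and "((M - K * L) * (K * K * L - K * L)) / (M * (K * K * L - 2 * (K * L)))
      \<le> (1 - 1 / (p * K)) * ((K - 1) / (K - 2))"
proof -
  have KL: "0 < K * L" using K L by simp
  then have Mpos: "0 < M" using M by linarith
  have eq: "((M - K * L) * (K * K * L - K * L)) / (M * (K * K * L - 2 * (K * L)))
      = (1 - K * L / M) * ((K - 1) / (K - 2))"
    using K L Mpos by (simp add: field_simps)
  show "0 \<le> ((M - K * L) * (K * K * L - K * L)) / (M * (K * K * L - 2 * (K * L)))"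
    unfolding eq using K KL M Mpos by (intro mult_nonneg_nonneg) (simp_all add: field_simps)
  have "K * L / (p * K\<^sup>2 * L) \<le> K * L / M" using M Mpos KL by (intro divide_left_mono) auto
  moreover have "K * L / (p * K\<^sup>2 * L) = 1 / (p * K)" using K L p by (simp add: field_simps power2_eq_square)
  ultimately show "((M - K * L) * (K * K * L - K * L)) / (M * (K * K * L - 2 * (K * L)))
      \<le> (1 - 1 / (p * K)) * ((K - 1) / (K - 2))"
    unfolding eq using K by (intro mult_right_mono) auto
qed

lemma moment_ratio_bound_le_majorant:
  assumes p: "0 < p" "p < 1" and l: "2 \<le> l" and k: "3 \<le> k" "3 \<le> p * real k"
  defines "m \<equiv> m_of p k l"
  shows "(((real m - real (k * l)) * (real (k * k * l) - real (k * l))) / (real m * (real (k * k * l) - 2 * real (k * l))))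
            ^ (k * l)
         * exp (real l * ((real (k * k * l - 2 * (k * l)) + 1) / (real (m - 2 * (k * l)) + 1) - 1))
      \<le> moment_ratio_majorant p l k"
proof -
  define K L M where "K = real k" and "L = real l" and "M = real m"
  note window = m_of_window[OF p l k, folded m_def]
  have K3: "3 \<le> K" and L2: "2 \<le> L" using k l unfolding K_def L_def by simp_all
  have M: "2 * (K * L) \<le> M" "M \<le> p * K\<^sup>2 * L" "p * K\<^sup>2 * L - 1 < M"
    using window(1) m_of_bounds[OF p(1), of k l] unfolding K_def L_def M_def m_def
    by (simp_all add: of_nat_le_iff[symmetric, where 'a = real])
  have base: "((M - K * L) * (K * K * L - K * L)) / (M * (K * K * L - 2 * (K * L)))
      \<le> (1 - 1 / (p * K)) * ((K - 1) / (K - 2))"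
    and base_nonneg: "0 \<le> ((M - K * L) * (K * K * L - K * L)) / (M * (K * K * L - 2 * (K * L)))"
    using moment_ratio_base_le[OF K3 _ p(1) M(1,2)] L2 by auto
  have "3 * (K * L) \<le> (p * K) * (K * L)"
    using k L2 K3 unfolding K_def by (intro mult_right_mono) auto
  then have denom: "0 < p * K\<^sup>2 * L - 2 * K * L" using K3 L2 by (simp add: power2_eq_square algebra_simps)
  have "(real (k * k * l - 2 * (k * l)) + 1) / (real (m - 2 * (k * l)) + 1)
      = (K\<^sup>2 * L - 2 * K * L + 1) / (M - 2 * K * L + 1)"
    using window unfolding K_def L_def M_def by (simp add: of_nat_diff power2_eq_square mult.assoc)
  also have "\<dots> \<le> (K\<^sup>2 * L - 2 * K * L + 1) / (p * K\<^sup>2 * L - 2 * K * L)"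
  proof (rule divide_left_mono)
    have "p * (K\<^sup>2 * L) \<le> 1 * (K\<^sup>2 * L)" using p L2 by (intro mult_right_mono) auto
    then show "0 \<le> K\<^sup>2 * L - 2 * K * L + 1" using denom by (simp add: mult.assoc)
  qed (use M(3) denom in auto)
  finally have rho: "exp (real l * ((real (k * k * l - 2 * (k * l)) + 1) / (real (m - 2 * (k * l)) + 1) - 1))
      \<le> exp (L * ((K\<^sup>2 * L - 2 * K * L + 1) / (p * K\<^sup>2 * L - 2 * K * L) - 1))"
    unfolding L_def by (intro exp_mono mult_left_mono) auto
  have B: "0 \<le> (1 - 1 / (p * K)) * ((K - 1) / (K - 2))" using base base_nonneg by linarith
  have "(((real m - real (k * l)) * (real (k * k * l) - real (k * l))) / (real m * (real (k * k * l) - 2 * real (k * l))))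
      ^ (k * l) \<le> (((1 - 1 / (p * K)) * ((K - 1) / (K - 2))) ^ k) ^ l"
    unfolding power_mult[symmetric] using base base_nonneg unfolding K_def L_def M_def
    by (intro power_mono) auto
  from mult_mono[OF this rho] B show ?thesis
    unfolding moment_ratio_majorant_def K_def L_def by simp
qed

lemma eventually_moment_bounds:
  assumes p: "0 < p" "p < 1" and l: "2 \<le> l"
  shows "\<forall>\<^sub>F k in sequentially.
    0 < measure_pmf.expectation (G_rand k l (m_of p k l)) (num_der k l) \<and>
    (measure_pmf.expectation (G_rand k l (m_of p k l)) (num_der k l))\<^sup>2
      \<le> measure_pmf.expectation (G_rand k l (m_of p k l)) (\<lambda>E. (num_der k l E)\<^sup>2) \<and>
    measure_pmf.expectation (G_rand k l (m_of p k l)) (\<lambda>E. (num_der k l E)\<^sup>2)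
      \<le> (measure_pmf.expectation (G_rand k l (m_of p k l)) (num_der k l))\<^sup>2 * moment_ratio_majorant p l k"
proof -
  have "\<forall>\<^sub>F k in sequentially. 3 \<le> k" by (rule eventually_ge_at_top)
  moreover have "\<forall>\<^sub>F k in sequentially. 3 \<le> p * real k" using p by real_asymp
  ultimately show ?thesis
  proof eventually_elim
    case (elim k)
    define m where "m = m_of p k l"
    note window = m_of_window[OF p l elim, folded m_def]
    have "0 < measure_pmf.expectation (G_rand k l m) (num_der k l)"
      using expectation_num_der[OF l] window by simp
    moreover have "finite (set_pmf (G_rand k l m))"
      using window l finite_Dsubgraphs Dsubgraphs_nonempty[of l m k] by (simp add: G_rand_def)
    moreover have "measure_pmf.expectation (G_rand k l m) (\<lambda>E. (num_der k l E)\<^sup>2)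
      \<le> (measure_pmf.expectation (G_rand k l m) (num_der k l))\<^sup>2 * moment_ratio_majorant p l k"
      using expectation_num_der_sq_le[OF l window] moment_ratio_bound_le_majorant[OF p l elim, folded m_def]
      by (meson mult_left_mono order_trans zero_le_power2)
    ultimately show ?case unfolding m_def by (simp add: expectation_sq_le_expectation_power2)
  qed
qed

theorem mainTheorem7:
  fixes l :: nat and p :: real
  assumes "l \<ge> 2" and "0 < p" and "p < 1"
  shows "(\<lambda>k. measure_pmf.expectation (G_rand k l (m_of p k l)) (\<lambda>E. (num_der k l E)^2))
         \<sim>[sequentially]
         (\<lambda>k. (measure_pmf.expectation (G_rand k l (m_of p k l)) (\<lambda>E. num_der k l E))^2)"
proof (rule asymp_equivI')
  define E1 where "E1 k = measure_pmf.expectation (G_rand k l (m_of p k l)) (num_der k l)" for k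
  define E2 where "E2 k = measure_pmf.expectation (G_rand k l (m_of p k l)) (\<lambda>E. (num_der k l E)\<^sup>2)" for k
  have "\<forall>\<^sub>F k in sequentially. 1 \<le> E2 k / (E1 k)\<^sup>2 \<and> E2 k / (E1 k)\<^sup>2 \<le> moment_ratio_majorant p l k"
    using eventually_moment_bounds[OF assms(2,3,1)] unfolding E1_def[symmetric] E2_def[symmetric]
    by eventually_elim (simp add: field_simps)
  then have "(\<lambda>k. E2 k / (E1 k)\<^sup>2) \<longlonglongrightarrow> 1"
    by (intro tendsto_sandwich[OF _ _ tendsto_const tendsto_moment_ratio_majorant[OF assms(2,3,1)]])
      (auto elim: eventually_mono)
  then show "(\<lambda>k. E2 k / (E1 k)\<^sup>2) \<longlonglongrightarrow> 1" .
qed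

end
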